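(* Let $X$ be a topological space possessing an infinite metrizable gauge, let $\kappa$ be a regular cardinal with $\kappa\in\mathrm{MG}(X)$, and let $G\in\mathcal{G}_\kappa$. If $X$ is finally $\kappa$-compact, then $(X,d)$ is complete for every $d\in\mathrm{Met}(X;G)$.
   Context: A linearly ordered Abelian group is an Abelian group with a linear order compatible with addition. For $x,y\in G_{>0}$, $x\asymp y$ iff $y\le nx$ and $x\le my$ for some $n,m\in\mathbb{Z}_{\ge1}$; $\mathrm{Arc}(G)=G_{>0}/\asymp$, ordered by $[x]\preceq[y]$ iff ($nx<y$ for all $n$) or $x\asymp y$; $\mathrm{Arc}(G)^\perp$ is $\mathrm{Arc}(G)$ with a new least element adjoined. For a bottomed linearly ordered set $S$ (least element $\perp_S$, $S^*=S\setminus\{\perp_S\}$), $\chi(S)$ is the least cardinal $\kappa>0$ such that some strictly decreasing family $(s_\alpha)_{\alpha<\kappa}$ in $S^*$ has every $t\in S^*$ bounded below by some $s_\alpha$. A $G$-metric: $d\colon X^2\to G$, $d(x,y)=0\iff x=y$, $d\ge0$, symmetric, triangle inequality; $\mathrm{Met}(X;G)$ is the set of $G$-metrics generating the topology of $X$ via open balls of radii in $G_{>0}$. $\mathrm{MG}(X)$: cardinals $\kappa$ with some $G$, $\chi(\mathrm{Arc}(G)^\perp)=\kappa$, $\mathrm{Met}(X;G)\ne\emptyset$; infinite metrizable gauge: some $\kappa\in\mathrm{MG}(X)$ with $\kappa\ge\omega_0$. $\mathcal{G}_\kappa$: groups with $\chi(\mathrm{Arc}(G)^\perp)=\kappa$.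 A filter $\mathcal F$ is Cauchy for $d$ if for every $\epsilon\in G_{>0}$ some $F\in\mathcal F$ has $d(x,y)<\epsilon$ for all $x,y\in F$; $(X,d)$ is complete if every Cauchy filter converges. $X$ is finally $\kappa$-compact if every open cover has a subcover of cardinality $<\kappa$. *)

theory Defs
  imports "HOL-Analysis.Analysis"
begin

definition arch_eq :: "'g::linordered_ab_group_add \<Rightarrow> 'g \<Rightarrow> bool" where
  "arch_eq x y \<longleftrightarrow> 0 < x \<and> 0 < y \<and>
     (\<exists>n::nat. n \<ge> 1 \<and> y \<le> (\<Sum>i<n. x)) \<and> (\<exists>m::nat. m \<ge> 1 \<and> x \<le> (\<Sum>i<m. y))"

definition arc_class :: "'g::linordered_ab_group_add \<Rightarrow> 'g set" where
  "arc_class x = {y. arch_eq x y}"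

definition Arc :: "'g::linordered_ab_group_add set set" where
  "Arc = {arc_class x | x. 0 < x}"

definition arc_le :: "'g::linordered_ab_group_add set \<Rightarrow> 'g set \<Rightarrow> bool" where
  "arc_le A B \<longleftrightarrow> (\<exists>x y. 0 < x \<and> 0 < y \<and> A = arc_class x \<and> B = arc_class y \<and>
      ((\<forall>n::nat. (\<Sum>i<n. x) < y) \<or> arch_eq x y))"

text \<open>For a bottomed set S with S* = S - {bot}, \<chi>(S) depends only on (S*, \<le>).
  A family indexed by the well-order (cardinal) k, strictly decreasing, coinitial in S*.\<close>
definition coinitial_family :: "'a set \<Rightarrow> ('a \<Rightarrow> 'a \<Rightarrow> bool) \<Rightarrow> 'c rel \<Rightarrow> bool" where
  "coinitial_family Sst le k \<longleftrightarrow> (\<exists>s::'c \<Rightarrow> 'a.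
      s ` Field k \<subseteq> Sst \<and>
      (\<forall>\<alpha> \<beta>. (\<alpha>, \<beta>) \<in> k \<and> \<alpha> \<noteq> \<beta> \<longrightarrow> le (s \<beta>) (s \<alpha>) \<and> s \<beta> \<noteq> s \<alpha>) \<and>
      (\<forall>t\<in>Sst. \<exists>\<alpha>\<in>Field k. le (s \<alpha>) t))"

definition chi_is :: "'a set \<Rightarrow> ('a \<Rightarrow> 'a \<Rightarrow> bool) \<Rightarrow> 'c rel \<Rightarrow> bool" where
  "chi_is Sst le k \<longleftrightarrow> Card_order k \<and> Field k \<noteq> {} \<and> coinitial_family Sst le k \<and>
     (\<forall>l::'c rel. Card_order l \<and> Field l \<noteq> {} \<and> coinitial_family Sst le l \<longrightarrow> (k, l) \<in> ordLeq)"

definition chi_Arc_is :: "'g::linordered_ab_group_add itself \<Rightarrow> 'c rel \<Rightarrow> bool" where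
  "chi_Arc_is _ k \<longleftrightarrow> chi_is (Arc :: 'g set set) arc_le k"

definition G_metric :: "'x set \<Rightarrow> ('x \<Rightarrow> 'x \<Rightarrow> 'g::linordered_ab_group_add) \<Rightarrow> bool" where
  "G_metric S d \<longleftrightarrow>
     (\<forall>x\<in>S. \<forall>y\<in>S. (d x y = 0 \<longleftrightarrow> x = y) \<and> 0 \<le> d x y \<and> d x y = d y x) \<and>
     (\<forall>x\<in>S. \<forall>y\<in>S. \<forall>z\<in>S. d x z \<le> d x y + d y z)"

definition Gball :: "'x set \<Rightarrow> ('x \<Rightarrow> 'x \<Rightarrow> 'g::linordered_ab_group_add) \<Rightarrow> 'x \<Rightarrow> 'g \<Rightarrow> 'x set" where
  "Gball S d x e = {y\<in>S. d x y < e}"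

definition Met :: "'x topology \<Rightarrow> ('x \<Rightarrow> 'x \<Rightarrow> 'g::linordered_ab_group_add) set" where
  "Met X = {d. G_metric (topspace X) d \<and>
     (\<forall>U. openin X U \<longleftrightarrow> U \<subseteq> topspace X \<and>
        (\<forall>x\<in>U. \<exists>e>0. Gball (topspace X) d x e \<subseteq> U))}"

definition Cauchy_filter :: "'x topology \<Rightarrow> ('x \<Rightarrow> 'x \<Rightarrow> 'g::linordered_ab_group_add) \<Rightarrow> 'x filter \<Rightarrow> bool" where
  "Cauchy_filter X d F \<longleftrightarrow> F \<noteq> bot \<and> F \<le> principal (topspace X) \<and>
     (\<forall>e>0. \<exists>A. eventually (\<lambda>x. x \<in> A) F \<and> (\<forall>x\<in>A. \<forall>y\<in>A. d x y < e))"

definition G_complete :: "'x topology \<Rightarrow> ('x \<Rightarrow> 'x \<Rightarrow> 'g::linordered_ab_group_add) \<Rightarrow> bool" where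
  "G_complete X d \<longleftrightarrow> (\<forall>F. Cauchy_filter X d F \<longrightarrow> (\<exists>x. limitin X id x F))"

definition finally_compact :: "'x topology \<Rightarrow> 'c rel \<Rightarrow> bool" where
  "finally_compact X k \<longleftrightarrow> (\<forall>\<U>. (\<forall>U\<in>\<U>. openin X U) \<and> topspace X \<subseteq> \<Union>\<U> \<longrightarrow>
      (\<exists>\<V>\<subseteq>\<U>. topspace X \<subseteq> \<Union>\<V> \<and> (card_of \<V>, k) \<in> ordLess))"

end

theory Submission
  imports Defs
begin

unbundle cardinal_syntax

text \<open>Suppose a Cauchy filter \<open>F\<close> has no limit. Then every point \<open>x\<close> is the centre of a ball
  of some radius \<open>r x\<close> that \<open>F\<close> does not eventually enter. Cover \<open>X\<close> by the balls of radii
  \<open>\<epsilon> x\<close> with \<open>2 \<epsilon> x < r x\<close>; by final \<open>\<kappa>\<close>-compactness fewer than \<open>\<kappa>\<close> of them suffice. Because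
  \<open>\<kappa> = \<chi>(Arc(G)\<^sup>\<bottom>)\<close> is regular, fewer than \<open>\<kappa>\<close> positive elements of \<open>G\<close> lie Archimedean-strictly
  above a common \<open>\<delta> > 0\<close>. An \<open>F\<close>-eventual set of diameter \<open>< \<delta>\<close> meets some chosen ball
  \<open>B(c, \<epsilon> c)\<close> and is therefore contained in \<open>B(c, r c)\<close>, a contradiction.\<close>

lemma regularCard_strict_upper_bound:
  assumes r: "Cinfinite r" and reg: "regularCard r" and K: "K \<subseteq> Field r" and small: "|K| <o r"
  shows "\<exists>b\<in>Field r. \<forall>k\<in>K. (k, b) \<in> r \<and> k \<noteq> b"
proof -
  have wo: "wo_rel r" using r by (simp add: Card_order_wo_rel)
  have "\<not> cofinal K r" using reg K small unfolding regularCard_def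
    by (force dest: not_ordLess_ordIso)
  then obtain a where a: "a \<in> Field r" and "\<forall>k\<in>K. \<not> (a \<noteq> k \<and> (a, k) \<in> r)"
    unfolding cofinal_def by auto
  then have below_a: "\<forall>k\<in>K. (k, a) \<in> r"
    using wo_rel.in_notinI[OF wo _ _ a] K by blast
  obtain b where b: "b \<in> Field r" "a \<noteq> b" "(a, b) \<in> r"
    using infinite_Card_order_limit[OF _ _ a] r unfolding cinfinite_def by blast
  show ?thesis
  proof (intro bexI[OF _ b(1)] ballI conjI)
    fix k assume "k \<in> K"
    then show "(k, b) \<in> r" "k \<noteq> b"
      using below_a b wo_rel.TRANS[OF wo] wo_rel.ANTISYM[OF wo]
      unfolding trans_def antisym_def by blast+
  qed
qed

definition natmul :: "nat \<Rightarrow> 'g::comm_monoid_add \<Rightarrow> 'g" where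
  "natmul n x = (\<Sum>i<n. x)"

lemma natmul_0 [simp]: "natmul 0 x = 0"
  by (simp add: natmul_def)

lemma natmul_Suc [simp]: "natmul (Suc n) x = x + natmul n x"
  by (simp add: natmul_def add.commute)

lemma natmul_1 [simp]: "natmul 1 x = x"
  by (simp add: natmul_def)

lemma natmul_2: "natmul 2 x = x + x"
  by (simp add: numeral_2_eq_2)

lemma natmul_add: "natmul (m + n) x = natmul m x + natmul n x"
  by (induction m) (simp_all add: add.assoc)

lemma natmul_natmul: "natmul m (natmul n x) = natmul (m * n) x"
  by (induction m) (simp_all add: natmul_add)

lemma natmul_mono: "x \<le> y \<Longrightarrow> natmul n x \<le> natmul n (y::'g::ordered_comm_monoid_add)"
  unfolding natmul_def by (rule sum_mono)

lemma natmul_less_cancel: "natmul n x < natmul n y \<Longrightarrow> x < (y::'g::linordered_ab_group_add)"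
  using natmul_mono by (metis not_le)

definition arch_bounded :: "'g::linordered_ab_group_add \<Rightarrow> 'g \<Rightarrow> bool" where
  "arch_bounded x y \<longleftrightarrow> (\<exists>n\<ge>1. x \<le> natmul n y)"

definition infinitely_less :: "'g::linordered_ab_group_add \<Rightarrow> 'g \<Rightarrow> bool" where
  "infinitely_less x y \<longleftrightarrow> (\<forall>n. natmul n x < y)"

lemma arch_bounded_refl: "arch_bounded x x"
  unfolding arch_bounded_def by (intro exI[of _ 1]) simp

lemma arch_bounded_trans: "arch_bounded x y \<Longrightarrow> arch_bounded y z \<Longrightarrow> arch_bounded x z"
  unfolding arch_bounded_def
proof (elim exE conjE)
  fix m n assume "1 \<le> m" "x \<le> natmul m y" "1 \<le> n" "y \<le> natmul n z"
  then have "x \<le> natmul (m * n) z"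
    by (metis natmul_mono natmul_natmul order.trans)
  then show "\<exists>k\<ge>1. x \<le> natmul k z" using \<open>1 \<le> m\<close> \<open>1 \<le> n\<close> by (intro exI[of _ "m * n"]) simp
qed

lemma infinitely_less_imp_arch_bounded: "infinitely_less x y \<Longrightarrow> arch_bounded x y"
  unfolding infinitely_less_def arch_bounded_def
  by (metis natmul_1 order.refl less_imp_le)

lemma infinitely_less_arch_bounded_trans:
  assumes "arch_bounded a u" "infinitely_less u v" "arch_bounded v b"
  shows "infinitely_less a b"
  unfolding infinitely_less_def
proof
  fix n
  obtain k where k: "a \<le> natmul k u" using assms(1) arch_bounded_def by blast
  obtain m where m: "v \<le> natmul m b" using assms(3) arch_bounded_def by blast
  have "natmul m (natmul n a) \<le> natmul (m * n * k) u"
    using natmul_mono[OF k, of "m * n"] natmul_natmul by metis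
  also have "\<dots> < v" using assms(2) infinitely_less_def by blast
  also have "\<dots> \<le> natmul m b" by (rule m)
  finally show "natmul n a < b" by (rule natmul_less_cancel)
qed

lemma arch_eq_iff_arch_bounded:
  "arch_eq x y \<longleftrightarrow> 0 < x \<and> 0 < y \<and> arch_bounded x y \<and> arch_bounded y x"
  unfolding arch_eq_def arch_bounded_def natmul_def by blast

lemma arc_class_eq_iff:
  assumes "0 < a"
  shows "arc_class a = arc_class b \<longleftrightarrow> arch_eq a b"
proof
  assume "arc_class a = arc_class b"
  moreover have "a \<in> arc_class a"
    using assms arch_bounded_refl by (simp add: arc_class_def arch_eq_iff_arch_bounded)
  ultimately show "arch_eq a b"
    by (auto simp: arc_class_def arch_eq_iff_arch_bounded)
next
  assume "arch_eq a b"
  then show "arc_class a = arc_class b"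
    unfolding arc_class_def arch_eq_iff_arch_bounded by (blast intro: arch_bounded_trans)
qed

lemma arc_le_arc_class_iff:
  assumes "0 < a" "0 < b"
  shows "arc_le (arc_class a) (arc_class b) \<longleftrightarrow> infinitely_less a b \<or> arch_eq a b"
proof
  assume "arc_le (arc_class a) (arc_class b)"
  then obtain u v where uv: "0 < u" "0 < v" "arc_class a = arc_class u" "arc_class b = arc_class v"
    "infinitely_less u v \<or> arch_eq u v"
    unfolding arc_le_def infinitely_less_def natmul_def by blast
  have "arch_eq a u" "arch_eq v b"
    using uv assms arc_class_eq_iff[of a u] arc_class_eq_iff[of v b] by auto
  then have "arch_bounded a u" "arch_bounded v b"
    by (simp_all add: arch_eq_iff_arch_bounded)
  moreover have "arch_eq a b" if "arch_eq u v"
    using that uv(1,3,4) assms(1) arc_class_eq_iff by metis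
  ultimately show "infinitely_less a b \<or> arch_eq a b"
    using uv(5) infinitely_less_arch_bounded_trans by blast
next
  assume "infinitely_less a b \<or> arch_eq a b"
  then show "arc_le (arc_class a) (arc_class b)"
    using assms unfolding arc_le_def infinitely_less_def natmul_def by blast
qed

lemma arc_le_strict_arc_le_imp_infinitely_less:
  assumes pos: "0 < a" "0 < b" "0 < c"
    and ab: "arc_le (arc_class a) (arc_class b)" "arc_class a \<noteq> arc_class b"
    and bc: "arc_le (arc_class b) (arc_class c)"
  shows "infinitely_less a c"
proof -
  have "infinitely_less a b"
    using ab arc_le_arc_class_iff[of a b] arc_class_eq_iff[of a b] pos by blast
  moreover have "infinitely_less b c \<or> arch_eq b c"
    using bc arc_le_arc_class_iff[of b c] pos by blast
  then have "arch_bounded b c"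
    using infinitely_less_imp_arch_bounded arch_eq_iff_arch_bounded by blast
  ultimately show ?thesis
    using arch_bounded_refl infinitely_less_arch_bounded_trans by blast
qed

lemma chi_Arc_small_set_infinitely_less_bound:
  fixes E :: "'g::linordered_ab_group_add set"
  assumes chi: "chi_Arc_is TYPE('g) \<kappa>" and inf: "Cinfinite \<kappa>" and reg: "regularCard \<kappa>"
    and pos: "E \<subseteq> {0<..}" and small: "|E| <o \<kappa>"
  shows "\<exists>\<delta>>0. \<forall>e\<in>E. infinitely_less \<delta> e"
proof -
  have "coinitial_family (Arc :: 'g set set) arc_le \<kappa>"
    using chi unfolding chi_Arc_is_def chi_is_def by blast
  then obtain s :: "_ \<Rightarrow> 'g set" where s_Arc: "s ` Field \<kappa> \<subseteq> Arc"
    and s_decr: "\<forall>\<alpha> \<beta>. (\<alpha>, \<beta>) \<in> \<kappa> \<and> \<alpha> \<noteq> \<beta> \<longrightarrow> arc_le (s \<beta>) (s \<alpha>) \<and> s \<beta> \<noteq> s \<alpha>"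
    and s_coinitial: "\<forall>t\<in>Arc. \<exists>\<alpha>\<in>Field \<kappa>. arc_le (s \<alpha>) t"
    unfolding coinitial_family_def by blast
  have "\<forall>e\<in>E. \<exists>\<alpha>\<in>Field \<kappa>. arc_le (s \<alpha>) (arc_class e)"
    using s_coinitial pos unfolding Arc_def by blast
  then obtain \<alpha> where \<alpha>: "\<forall>e\<in>E. \<alpha> e \<in> Field \<kappa> \<and> arc_le (s (\<alpha> e)) (arc_class e)"
    by metis
  have "|\<alpha> ` E| <o \<kappa>" using card_of_image small by (rule ordLeq_ordLess_trans)
  then obtain \<beta> where \<beta>: "\<beta> \<in> Field \<kappa>" "\<And>e. e \<in> E \<Longrightarrow> (\<alpha> e, \<beta>) \<in> \<kappa> \<and> \<alpha> e \<noteq> \<beta>"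
    using regularCard_strict_upper_bound[OF inf reg, of "\<alpha> ` E"] \<alpha> by blast
  obtain \<delta> where \<delta>: "0 < \<delta>" "s \<beta> = arc_class \<delta>" using s_Arc \<beta>(1) unfolding Arc_def by blast
  have "infinitely_less \<delta> e" if e: "e \<in> E" for e
  proof -
    obtain \<gamma> where \<gamma>: "0 < \<gamma>" "s (\<alpha> e) = arc_class \<gamma>"
      using s_Arc \<alpha> e unfolding Arc_def by blast
    have "(\<alpha> e, \<beta>) \<in> \<kappa> \<and> \<alpha> e \<noteq> \<beta>" using \<beta>(2)[OF e] .
    then have "arc_le (s \<beta>) (s (\<alpha> e)) \<and> s \<beta> \<noteq> s (\<alpha> e)" using s_decr by blast
    moreover have "arc_le (s (\<alpha> e)) (arc_class e)" "0 < e" using \<alpha> pos e by auto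
    ultimately show ?thesis
      using arc_le_strict_arc_le_imp_infinitely_less[OF \<delta>(1) \<gamma>(1)] unfolding \<delta>(2) \<gamma>(2) by blast
  qed
  then show ?thesis using \<delta>(1) by blast
qed

lemma Met_G_metric: "d \<in> Met X \<Longrightarrow> G_metric (topspace X) d"
  unfolding Met_def by blast

lemma openin_Met_iff:
  "d \<in> Met X \<Longrightarrow> openin X U \<longleftrightarrow>
    U \<subseteq> topspace X \<and> (\<forall>x\<in>U. \<exists>e>0. Gball (topspace X) d x e \<subseteq> U)"
  unfolding Met_def by blast

lemma G_metric_self: "G_metric S d \<Longrightarrow> x \<in> S \<Longrightarrow> d x x = 0"
  unfolding G_metric_def by blast

lemma G_metric_triangle:
  "G_metric S d \<Longrightarrow> x \<in> S \<Longrightarrow> y \<in> S \<Longrightarrow> z \<in> S \<Longrightarrow> d x z \<le> d x y + d y z"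
  unfolding G_metric_def by blast

lemma centre_in_Gball: "G_metric S d \<Longrightarrow> x \<in> S \<Longrightarrow> 0 < e \<Longrightarrow> x \<in> Gball S d x e"
  by (simp add: G_metric_self Gball_def)

lemma openin_Met_imp_Gball:
  "d \<in> Met X \<Longrightarrow> openin X U \<Longrightarrow> x \<in> U \<Longrightarrow> \<exists>e>0. Gball (topspace X) d x e \<subseteq> U"
  unfolding Met_def by blast

lemma openin_Gball:
  assumes d: "d \<in> Met X" and x: "x \<in> topspace X"
  shows "openin X (Gball (topspace X) d x e)"
proof -
  have "\<exists>e'>0. Gball (topspace X) d y e' \<subseteq> Gball (topspace X) d x e"
    if y: "y \<in> Gball (topspace X) d x e" for y
  proof (intro exI[of _ "e - d x y"] conjI subsetI)
    show "0 < e - d x y" using y by (simp add: Gball_def)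
    fix z assume z: "z \<in> Gball (topspace X) d y (e - d x y)"
    have "d x z \<le> d x y + d y z"
      using G_metric_triangle[OF Met_G_metric[OF d] x] y z by (simp add: Gball_def)
    also have "\<dots> < e" using z by (simp add: Gball_def less_diff_eq add.commute)
    finally show "z \<in> Gball (topspace X) d x e" using z by (simp add: Gball_def)
  qed
  moreover have "Gball (topspace X) d x e \<subseteq> topspace X" by (auto simp: Gball_def)
  ultimately show ?thesis by (simp add: openin_Met_iff[OF d])
qed

lemma limitin_Met_iff:
  fixes d :: "'x \<Rightarrow> 'x \<Rightarrow> 'g::linordered_ab_group_add"
  assumes d: "d \<in> Met X"
  shows "limitin X id x F \<longleftrightarrow>
    x \<in> topspace X \<and> (\<forall>r>0. eventually (\<lambda>y. y \<in> Gball (topspace X) d x r) F)"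
proof
  assume lim: "limitin X id x F"
  then have x: "x \<in> topspace X" by (simp add: limitin_def)
  have "eventually (\<lambda>y. y \<in> Gball (topspace X) d x r) F" if "0 < r" for r
  proof -
    have "x \<in> Gball (topspace X) d x r"
      using centre_in_Gball[OF Met_G_metric[OF d] x that] .
    then show ?thesis using lim openin_Gball[OF d x] unfolding limitin_def id_def by blast
  qed
  with x show "x \<in> topspace X \<and> (\<forall>r>0. eventually (\<lambda>y. y \<in> Gball (topspace X) d x r) F)"
    by blast
next
  assume "x \<in> topspace X \<and> (\<forall>r>0. eventually (\<lambda>y. y \<in> Gball (topspace X) d x r) F)"
  then have x: "x \<in> topspace X" and balls: "\<forall>r>0. eventually (\<lambda>y. y \<in> Gball (topspace X) d x r) F"
    by blast+
  have "eventually (\<lambda>y. y \<in> U) F" if U: "openin X U" "x \<in> U" for U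
  proof -
    obtain r where r: "0 < r" and sub: "Gball (topspace X) d x r \<subseteq> U"
      using openin_Met_imp_Gball[OF d U] by blast
    have "eventually (\<lambda>y. y \<in> Gball (topspace X) d x r) F" using balls r by blast
    then show ?thesis by (rule eventually_mono) (use sub in blast)
  qed
  then show "limitin X id x F" using x by (simp add: limitin_def)
qed

lemma finally_compact_centred_subcover:
  assumes fc: "finally_compact X \<kappa>"
    and U: "\<And>x. x \<in> topspace X \<Longrightarrow> openin X (U x) \<and> x \<in> U x"
  shows "\<exists>C\<subseteq>topspace X. |C| <o \<kappa> \<and> topspace X \<subseteq> (\<Union>c\<in>C. U c)"
proof -
  have "\<forall>V\<in>U ` topspace X. openin X V" "topspace X \<subseteq> \<Union>(U ` topspace X)"
    using U by blast+
  then obtain \<V> where \<V>: "\<V> \<subseteq> U ` topspace X" "topspace X \<subseteq> \<Union>\<V>" "|\<V>| <o \<kappa>"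
    using fc[unfolded finally_compact_def, rule_format, of "U ` topspace X"] by blast
  have "\<forall>V\<in>\<V>. \<exists>x. x \<in> topspace X \<and> V = U x" using \<V>(1) by blast
  then obtain c where c: "\<forall>V\<in>\<V>. c V \<in> topspace X \<and> V = U (c V)" by metis
  have "c ` \<V> \<subseteq> topspace X" using c by blast
  moreover have "|c ` \<V>| <o \<kappa>" using card_of_image \<V>(3) by (rule ordLeq_ordLess_trans)
  moreover have "topspace X \<subseteq> (\<Union>x\<in>c ` \<V>. U x)" using \<V>(2) c by fastforce
  ultimately show ?thesis by blast
qed

lemma Cauchy_filter_eventually_in_Gball:
  assumes d: "G_metric (topspace X) d" and F: "Cauchy_filter X d F"
    and C: "C \<subseteq> topspace X" and cover: "topspace X \<subseteq> (\<Union>c\<in>C. Gball (topspace X) d c (\<epsilon> c))"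
    and \<delta>: "0 < \<delta>" "\<forall>c\<in>C. \<delta> < \<epsilon> c \<and> \<epsilon> c + \<epsilon> c < r c"
  shows "\<exists>c\<in>C. eventually (\<lambda>y. y \<in> Gball (topspace X) d c (r c)) F"
proof -
  obtain A where A_ev: "eventually (\<lambda>x. x \<in> A) F" and A_small: "\<forall>x\<in>A. \<forall>y\<in>A. d x y < \<delta>"
    using F \<delta>(1) unfolding Cauchy_filter_def by blast
  define A' where "A' = A \<inter> topspace X"
  have "eventually (\<lambda>x. x \<in> topspace X) F" using F by (simp add: Cauchy_filter_def le_principal)
  with A_ev have A'_ev: "eventually (\<lambda>x. x \<in> A') F"
    unfolding A'_def by (simp add: eventually_conj)
  moreover have "F \<noteq> bot" using F by (simp add: Cauchy_filter_def)
  ultimately obtain a where a: "a \<in> A'" using eventually_happens' by blast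
  then obtain c where c: "c \<in> C" "a \<in> Gball (topspace X) d c (\<epsilon> c)"
    using cover unfolding A'_def by blast
  have sub: "A' \<subseteq> Gball (topspace X) d c (r c)"
  proof
    fix b assume b: "b \<in> A'"
    have "d c b \<le> d c a + d a b"
      using G_metric_triangle[OF d] C c(1) a b by (auto simp: A'_def)
    also have "\<dots> < \<epsilon> c + \<epsilon> c"
    proof (rule add_strict_mono)
      show "d c a < \<epsilon> c" using c(2) by (simp add: Gball_def)
      have "d a b < \<delta>" using A_small a b by (simp add: A'_def)
      also have "\<delta> < \<epsilon> c" using \<delta>(2) c(1) by blast
      finally show "d a b < \<epsilon> c" .
    qed
    also have "\<dots> < r c" using \<delta>(2) c(1) by blast
    finally show "b \<in> Gball (topspace X) d c (r c)" using b by (simp add: Gball_def A'_def)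
  qed
  from A'_ev have "eventually (\<lambda>y. y \<in> Gball (topspace X) d c (r c)) F"
    by (rule eventually_mono) (use sub in blast)
  with c(1) show ?thesis by blast
qed

lemma finally_compact_imp_G_complete:
  fixes d :: "'x \<Rightarrow> 'x \<Rightarrow> 'g::linordered_ab_group_add"
  assumes d: "d \<in> Met X" and fc: "finally_compact X \<kappa>" and inf: "Cinfinite \<kappa>"
    and bound: "\<And>E :: 'g set. E \<subseteq> {0<..} \<Longrightarrow> |E| <o \<kappa> \<Longrightarrow> \<exists>\<delta>>0. \<forall>e\<in>E. \<delta> + \<delta> < e"
  shows "G_complete X d"
  unfolding G_complete_def
proof (intro allI impI)
  fix F assume F: "Cauchy_filter X d F"
  show "\<exists>x. limitin X id x F"
  proof (rule ccontr)
    assume "\<nexists>x. limitin X id x F"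
    then have "\<forall>x\<in>topspace X. \<exists>r>0. \<not> eventually (\<lambda>y. y \<in> Gball (topspace X) d x r) F"
      using limitin_Met_iff[OF d] by blast
    then obtain r where r: "\<forall>x\<in>topspace X.
        0 < r x \<and> \<not> eventually (\<lambda>y. y \<in> Gball (topspace X) d x (r x)) F"
      by metis
    have "\<forall>x\<in>topspace X. \<exists>\<epsilon>>0. \<epsilon> + \<epsilon> < r x"
    proof
      fix x assume "x \<in> topspace X"
      moreover have "|{r x}| <o \<kappa>"
        using inf by (intro Cfinite_ordLess_Cinfinite)
          (auto simp: cfinite_def Field_card_of card_of_card_order_on)
      ultimately show "\<exists>\<epsilon>>0. \<epsilon> + \<epsilon> < r x" using bound[of "{r x}"] r by auto
    qed
    then obtain \<epsilon> where \<epsilon>: "\<forall>x\<in>topspace X. 0 < \<epsilon> x \<and> \<epsilon> x + \<epsilon> x < r x"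
      by metis
    have small_balls: "openin X (Gball (topspace X) d x (\<epsilon> x)) \<and> x \<in> Gball (topspace X) d x (\<epsilon> x)"
      if "x \<in> topspace X" for x
      using openin_Gball[OF d that] centre_in_Gball[OF Met_G_metric[OF d] that] \<epsilon> that by blast
    obtain C where C: "C \<subseteq> topspace X" "|C| <o \<kappa>"
      and cover: "topspace X \<subseteq> (\<Union>c\<in>C. Gball (topspace X) d c (\<epsilon> c))"
      using finally_compact_centred_subcover[OF fc small_balls] by blast
    have "\<epsilon> ` C \<subseteq> {0<..}" using \<epsilon> C(1) by auto
    moreover have "|\<epsilon> ` C| <o \<kappa>" using card_of_image C(2) by (rule ordLeq_ordLess_trans)
    ultimately have "\<exists>\<delta>>0. \<forall>e\<in>\<epsilon> ` C. \<delta> + \<delta> < e" by (rule bound)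
    then obtain \<delta> where \<delta>: "0 < \<delta>" "\<forall>c\<in>C. \<delta> + \<delta> < \<epsilon> c" by blast
    have "\<forall>c\<in>C. \<delta> < \<epsilon> c \<and> \<epsilon> c + \<epsilon> c < r c"
    proof
      fix c assume c: "c \<in> C"
      have "\<delta> < \<delta> + \<delta>" using \<delta>(1) by simp
      also have "\<dots> < \<epsilon> c" using \<delta>(2) c by blast
      finally show "\<delta> < \<epsilon> c \<and> \<epsilon> c + \<epsilon> c < r c" using \<epsilon> C(1) c by blast
    qed
    then obtain c where "c \<in> C" "eventually (\<lambda>y. y \<in> Gball (topspace X) d c (r c)) F"
      using Cauchy_filter_eventually_in_Gball[OF Met_G_metric[OF d] F C(1) cover \<delta>(1)] by blast
    then show False using r C(1) by blast
  qed
qed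

theorem lemma2p61:
  fixes X :: "'x topology" and \<kappa> :: "'c rel"
    and d0 :: "'x \<Rightarrow> 'x \<Rightarrow> 'k::linordered_ab_group_add" and mu :: "'l rel"
    and d1 :: "'x \<Rightarrow> 'x \<Rightarrow> 'h::linordered_ab_group_add"
  assumes gauge_chi: "chi_Arc_is TYPE('k) mu" and gauge_inf: "(natLeq, mu) \<in> ordLeq"
    and gauge_met: "d0 \<in> Met X"
    and reg: "Cinfinite \<kappa>" "regularCard \<kappa>"
    and MG_chi: "chi_Arc_is TYPE('h) \<kappa>" and MG_met: "d1 \<in> Met X"
    and G: "chi_Arc_is TYPE('g::linordered_ab_group_add) \<kappa>"
    and fc: "finally_compact X \<kappa>"
  shows "\<forall>d::'x \<Rightarrow> 'x \<Rightarrow> 'g. d \<in> Met X \<longrightarrow> G_complete X d"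
proof (intro allI impI)
  fix d :: "'x \<Rightarrow> 'x \<Rightarrow> 'g" assume d: "d \<in> Met X"
  have "\<exists>\<delta>>0. \<forall>e\<in>E. \<delta> + \<delta> < e" if E: "E \<subseteq> {0<..}" "|E| <o \<kappa>" for E :: "'g set"
  proof -
    obtain \<delta> where "0 < \<delta>" "\<forall>e\<in>E. infinitely_less \<delta> e"
      using chi_Arc_small_set_infinitely_less_bound[OF G reg E] by blast
    then show ?thesis by (metis infinitely_less_def natmul_2)
  qed
  then show "G_complete X d" by (rule finally_compact_imp_G_complete[OF d fc reg(1)])
qed

end
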